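(* Let $(V,\mathcal H,\iota,W)$ be a generalized functional theory and $k$ a positive integer. Let $\bar{\mathcal F}_p$ be the pure functional of the $k$-convexified theory $(V,\mathcal H\otimes\mathbb C^k,\bar\iota,W\otimes\mathbb 1)$, where $\bar\iota(v)=\iota(v)\otimes\mathbb 1$. Then $\mathrm{conv}_k(\mathcal F_p)=\bar{\mathcal F}_p$.
   Context: A generalized functional theory is a tuple $(V,\mathcal H,\iota,W)$ with $V$ a finite-dimensional real vector space, $\mathcal H$ a finite-dimensional complex Hilbert space, $\iota:V\to i\mathfrak u(\mathcal H)$ linear into the Hermitian operators, $W$ Hermitian. Density operators are regarded as linear functionals via the trace pairing, and $\iota^*$ is the dual map. The pure functional of such a theory is $\mathcal F_p(\rho)=\min\{\langle\Psi|W|\Psi\rangle:\|\Psi\|=1,\iota^*(|\Psi\rangle\langle\Psi|)=\rho\}$, defined on the set $\iota^*(\mathcal P)$ of images of pure states; $\bar{\mathcal F}_p$ is defined analogously with $\mathcal H\otimes\mathbb C^k$, $\bar\iota$, $W\otimes\mathbb 1$. For $f:X\to\mathbb R$, $\mathrm{conv}_k(X)=\{\sum_{i=1}^kt_is_i:s_i\in X,t_i\ge0,\sum t_i=1\}$ and $\mathrm{conv}_k(f):\mathrm{conv}_k(X)\to\mathbb R$, $s\mapsto\inf\{\sum_{i=1}^kt_if(s_i):\sum_it_is_i=s, s_i\in X,t_i\ge0,\sum t_i=1\}$. *)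

theory Defs
  imports "HOL-Analysis.Euclidean_Space" "Jordan_Normal_Form.Matrix"
begin

text \<open>Finite-dimensional complex Hilbert space H = C^n, operators = n x n complex matrices.
  The finite-dimensional real vector space V is an arbitrary type of class euclidean_space.\<close>

definition hermitian_mat :: "nat \<Rightarrow> complex mat \<Rightarrow> bool" where
  "hermitian_mat n A \<longleftrightarrow> A \<in> carrier_mat n n \<and> (\<forall>i<n. \<forall>j<n. A $$ (i, j) = cnj (A $$ (j, i)))"

definition gen_functional_theory :: "nat \<Rightarrow> ('v::euclidean_space \<Rightarrow> complex mat) \<Rightarrow> complex mat \<Rightarrow> bool" where
  "gen_functional_theory n \<iota> W \<longleftrightarrow>
     (\<forall>v. hermitian_mat n (\<iota> v)) \<and>
     (\<forall>v w. \<iota> (v + w) = \<iota> v + \<iota> w) \<and>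
     (\<forall>r v. \<iota> (r *\<^sub>R v) = complex_of_real r \<cdot>\<^sub>m \<iota> v) \<and>
     hermitian_mat n W"

text \<open>Kronecker (tensor) product; basis vector e_a (x) e_i of C^m (x) C^k corresponds to index a*k+i.\<close>
definition kron :: "complex mat \<Rightarrow> complex mat \<Rightarrow> complex mat" where
  "kron A B = mat (dim_row A * dim_row B) (dim_col A * dim_col B)
     (\<lambda>(i, j). A $$ (i div dim_row B, j div dim_col B) * B $$ (i mod dim_row B, j mod dim_col B))"

definition unit_vecs :: "nat \<Rightarrow> complex vec set" where
  "unit_vecs n = {\<Psi>. \<Psi> \<in> carrier_vec n \<and> (\<Sum>i<n. (cmod (\<Psi> $ i))\<^sup>2) = 1}"

definition proj :: "complex vec \<Rightarrow> complex mat" where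
  "proj \<Psi> = mat (dim_vec \<Psi>) (dim_vec \<Psi>) (\<lambda>(i, j). \<Psi> $ i * cnj (\<Psi> $ j))"

definition mat_trace :: "complex mat \<Rightarrow> complex" where
  "mat_trace A = (\<Sum>i<dim_row A. A $$ (i, i))"

text \<open>Dual map iota^*: a density operator rho is sent to the linear functional v |-> tr(rho iota(v))
  (real-valued for Hermitian rho and iota(v)).\<close>
definition dual_map :: "('v \<Rightarrow> complex mat) \<Rightarrow> complex mat \<Rightarrow> ('v \<Rightarrow> real)" where
  "dual_map \<iota> \<rho> = (\<lambda>v. Re (mat_trace (\<rho> * \<iota> v)))"

definition expval :: "complex mat \<Rightarrow> complex vec \<Rightarrow> real" where
  "expval W \<Psi> = Re (conjugate \<Psi> \<bullet> (W *\<^sub>v \<Psi>))"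

definition pure_image :: "nat \<Rightarrow> ('v \<Rightarrow> complex mat) \<Rightarrow> ('v \<Rightarrow> real) set" where
  "pure_image n \<iota> = {dual_map \<iota> (proj \<Psi>) | \<Psi>. \<Psi> \<in> unit_vecs n}"

text \<open>The pure functional (the minimum is attained by compactness; written as Inf).\<close>
definition pure_functional :: "nat \<Rightarrow> ('v \<Rightarrow> complex mat) \<Rightarrow> complex mat \<Rightarrow> ('v \<Rightarrow> real) \<Rightarrow> real" where
  "pure_functional n \<iota> W \<rho> =
     Inf {expval W \<Psi> | \<Psi>. \<Psi> \<in> unit_vecs n \<and> dual_map \<iota> (proj \<Psi>) = \<rho>}"

definition conv_set :: "nat \<Rightarrow> ('v \<Rightarrow> real) set \<Rightarrow> ('v \<Rightarrow> real) set" where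
  "conv_set k X = {s. \<exists>t x. (\<forall>i<k. x i \<in> X \<and> t i \<ge> 0) \<and> (\<Sum>i<k. t i) = 1 \<and>
                            s = (\<lambda>v. \<Sum>i<k. t i * x i v)}"

definition conv_fun :: "nat \<Rightarrow> ('v \<Rightarrow> real) set \<Rightarrow> (('v \<Rightarrow> real) \<Rightarrow> real) \<Rightarrow> ('v \<Rightarrow> real) \<Rightarrow> real" where
  "conv_fun k X f s = Inf {\<Sum>i<k. t i * f (x i) | t x.
       (\<forall>i<k. x i \<in> X \<and> t i \<ge> 0) \<and> (\<Sum>i<k. t i) = 1 \<and> s = (\<lambda>v. \<Sum>i<k. t i * x i v)}"

text \<open>The k-convexified theory: iota-bar(v) = iota(v) (x) 1, W-bar = W (x) 1 on C^n (x) C^k = C^(n*k).\<close>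
definition conv_iota :: "nat \<Rightarrow> ('v \<Rightarrow> complex mat) \<Rightarrow> ('v \<Rightarrow> complex mat)" where
  "conv_iota k \<iota> = (\<lambda>v. kron (\<iota> v) (1\<^sub>m k))"

end

theory Submission
  imports Defs
begin

(* A vector Psi of C^n (x) C^k amounts to k slices psi_i of C^n, Psi = sum_i psi_i (x) e_i, and an
   operator A (x) 1 acts slice by slice. Writing psi_i = sqrt(t_i) phi_i with unit vectors phi_i, the
   unit vectors Psi correspond to weights t_i >= 0 with sum 1 together with k unit vectors phi_i, and
   both the image of |Psi><Psi| under the dual of iota-bar and the energy <Psi|W (x) 1|Psi> are the
   t-weighted averages of the corresponding quantities for the phi_i. So the pure states of the
   convexified theory realise exactly the k-fold convex combinations of the pairs
   (iota^*(|phi><phi|), <phi|W|phi>), and the identity of functionals reduces to the fact that an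
   infimum of weighted sums over independent fibres is the weighted sum of the fibrewise infima. *)

section \<open>Unit vectors and expectation values\<close>

definition sq_norm :: "complex vec \<Rightarrow> real" where
  "sq_norm \<psi> = (\<Sum>a<dim_vec \<psi>. (cmod (\<psi> $ a))\<^sup>2)"

lemma unit_vecs_iff: "\<psi> \<in> unit_vecs n \<longleftrightarrow> \<psi> \<in> carrier_vec n \<and> sq_norm \<psi> = 1"
  by (auto simp: unit_vecs_def sq_norm_def)

lemma sq_norm_smult: "sq_norm (c \<cdot>\<^sub>v \<psi>) = (cmod c)\<^sup>2 * sq_norm \<psi>"
  by (simp add: sq_norm_def sum_distrib_left norm_mult power_mult_distrib)

lemma sq_norm_nonneg: "0 \<le> sq_norm \<psi>"
  by (simp add: sq_norm_def sum_nonneg)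

lemma sq_norm_eq_0_iff: "sq_norm \<psi> = 0 \<longleftrightarrow> \<psi> = 0\<^sub>v (dim_vec \<psi>)"
  by (auto simp: sq_norm_def sum_nonneg_eq_0_iff vec_eq_iff)

lemma unit_vecs_norm_entry_le_1:
  assumes "\<psi> \<in> unit_vecs n" "a < n"
  shows "cmod (\<psi> $ a) \<le> 1"
proof -
  have "(cmod (\<psi> $ a))\<^sup>2 \<le> (\<Sum>b<n. (cmod (\<psi> $ b))\<^sup>2)"
    using assms(2) by (intro member_le_sum) auto
  then have "(cmod (\<psi> $ a))\<^sup>2 \<le> 1"
    using assms(1) by (simp add: unit_vecs_def)
  then show ?thesis
    by (simp add: power_le_one_iff)
qed

lemma scaled_unit_vec_exists:
  assumes "\<psi> \<in> carrier_vec n" "0 < n"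
  obtains \<phi> where "\<phi> \<in> unit_vecs n" "\<psi> = complex_of_real (sqrt (sq_norm \<psi>)) \<cdot>\<^sub>v \<phi>"
proof (cases "sq_norm \<psi> = 0")
  case True
  have "sq_norm (unit_vec n 0) = (\<Sum>a<n. if a = 0 then 1 else 0)"
    unfolding sq_norm_def by (intro sum.cong) auto
  then have "unit_vec n 0 \<in> unit_vecs n"
    using assms(2) by (simp add: unit_vecs_iff)
  moreover have "\<psi> = complex_of_real (sqrt (sq_norm \<psi>)) \<cdot>\<^sub>v unit_vec n 0"
    using True assms(1) by (auto simp: sq_norm_eq_0_iff)
  ultimately show ?thesis by (rule that)
next
  case False
  let ?s = "sqrt (sq_norm \<psi>)"
  have pos: "0 < sq_norm \<psi>"
    using False sq_norm_nonneg by (simp add: less_le)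
  have "complex_of_real (1 / ?s) \<cdot>\<^sub>v \<psi> \<in> unit_vecs n"
    using assms(1) pos by (simp add: unit_vecs_iff sq_norm_smult norm_divide power_divide)
  moreover have "\<psi> = complex_of_real ?s \<cdot>\<^sub>v (complex_of_real (1 / ?s) \<cdot>\<^sub>v \<psi>)"
    using assms(1) pos by (auto simp: smult_smult_assoc simp flip: of_real_mult)
  ultimately show ?thesis by (rule that)
qed

lemma expval_eq_sum:
  assumes "A \<in> carrier_mat n n" "\<psi> \<in> carrier_vec n"
  shows "expval A \<psi> = Re (\<Sum>b<n. \<Sum>a<n. cnj (\<psi> $ b) * A $$ (b, a) * \<psi> $ a)"
  using assms
  by (auto simp: expval_def scalar_prod_def lessThan_atLeast0 sum_distrib_left mult.assoc
      intro!: sum.cong)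

lemma mat_trace_proj_mult:
  assumes "A \<in> carrier_mat n n" "\<psi> \<in> carrier_vec n"
  shows "mat_trace (proj \<psi> * A) = conjugate \<psi> \<bullet> (A *\<^sub>v \<psi>)"
proof -
  have "mat_trace (proj \<psi> * A) = (\<Sum>a<n. \<Sum>b<n. cnj (\<psi> $ b) * (A $$ (b, a) * \<psi> $ a))"
    using assms by (auto simp: mat_trace_def proj_def scalar_prod_def lessThan_atLeast0
        sum_distrib_left mult_ac intro!: sum.cong)
  also have "\<dots> = conjugate \<psi> \<bullet> (A *\<^sub>v \<psi>)"
    using assms by (subst sum.swap) (auto simp: scalar_prod_def lessThan_atLeast0 sum_distrib_left
        intro!: sum.cong)
  finally show ?thesis .
qed

lemma dual_map_proj:
  assumes "\<iota> v \<in> carrier_mat n n" "\<psi> \<in> carrier_vec n"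
  shows "dual_map \<iota> (proj \<psi>) v = expval (\<iota> v) \<psi>"
  using assms by (simp add: dual_map_def expval_def mat_trace_proj_mult)

lemma expval_smult:
  assumes "A \<in> carrier_mat n n" "\<psi> \<in> carrier_vec n"
  shows "expval A (c \<cdot>\<^sub>v \<psi>) = (cmod c)\<^sup>2 * expval A \<psi>"
proof -
  have "conjugate (c \<cdot>\<^sub>v \<psi>) \<bullet> (A *\<^sub>v (c \<cdot>\<^sub>v \<psi>)) = c * cnj c * (conjugate \<psi> \<bullet> (A *\<^sub>v \<psi>))"
    using assms by (simp add: conjugate_smult_vec mult_mat_vec mult_ac)
  then show ?thesis by (simp add: expval_def flip: complex_norm_square)
qed

lemma abs_expval_le_sum_entries:
  assumes "A \<in> carrier_mat n n" "\<psi> \<in> unit_vecs n"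
  shows "\<bar>expval A \<psi>\<bar> \<le> (\<Sum>b<n. \<Sum>a<n. cmod (A $$ (b, a)))"
proof -
  have \<psi>: "\<psi> \<in> carrier_vec n" using assms(2) by (simp add: unit_vecs_iff)
  have "\<bar>expval A \<psi>\<bar> \<le> cmod (\<Sum>b<n. \<Sum>a<n. cnj (\<psi> $ b) * A $$ (b, a) * \<psi> $ a)"
    unfolding expval_eq_sum[OF assms(1) \<psi>] by (rule abs_Re_le_cmod)
  also have "\<dots> \<le> (\<Sum>b<n. \<Sum>a<n. cmod (\<psi> $ b) * cmod (A $$ (b, a)) * cmod (\<psi> $ a))"
    by (rule order_trans[OF norm_sum sum_mono], rule order_trans[OF norm_sum])
      (simp add: norm_mult)
  also have "\<dots> \<le> (\<Sum>b<n. \<Sum>a<n. cmod (A $$ (b, a)))"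
  proof (intro sum_mono)
    fix b a assume "b \<in> {..<n}" "a \<in> {..<n}"
    then have "cmod (\<psi> $ b) \<le> 1" "cmod (\<psi> $ a) \<le> 1"
      using unit_vecs_norm_entry_le_1[OF assms(2)] by auto
    then show "cmod (\<psi> $ b) * cmod (A $$ (b, a)) * cmod (\<psi> $ a) \<le> cmod (A $$ (b, a))"
      by (meson mult_left_le mult_left_le_one_le order_trans mult_nonneg_nonneg norm_ge_zero)
  qed
  finally show ?thesis .
qed

section \<open>Slices of vectors in C^n (x) C^k\<close>

lemma sum_lessThan_mult: "(\<Sum>p<n * (k::nat). f p) = (\<Sum>a<n. \<Sum>i<k. f (a * k + i))"
proof -
  have "(\<Sum>p\<in>{a * k..<a * k + k}. f p) = (\<Sum>i<k. f (a * k + i))" for a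
    using sum.atLeastLessThan_shift_0[of f "a * k" "a * k + k"]
    by (simp add: lessThan_atLeast0 comp_def add.commute)
  then show ?thesis by (simp flip: sum.nat_group)
qed

lemma mult_add_less_mult: "b < n \<Longrightarrow> j < k \<Longrightarrow> b * k + j < n * (k::nat)"
  using mult_le_mono1[of "Suc b" n k] by simp

(* Since kron gives the basis vector e_a (x) e_i the index a * k + i, a vector Psi of C^(n * k)
   is the sum of the tensors slice n k i Psi (x) e_i. *)
definition slice :: "nat \<Rightarrow> nat \<Rightarrow> nat \<Rightarrow> complex vec \<Rightarrow> complex vec" where
  "slice n k i \<Psi> = vec n (\<lambda>a. \<Psi> $ (a * k + i))"

definition join_slices :: "nat \<Rightarrow> nat \<Rightarrow> (nat \<Rightarrow> complex vec) \<Rightarrow> complex vec" where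
  "join_slices n k \<psi> = vec (n * k) (\<lambda>p. \<psi> (p mod k) $ (p div k))"

lemma slice_carrier [simp]: "slice n k i \<Psi> \<in> carrier_vec n"
  by (simp add: slice_def)

lemma join_slices_carrier [simp]: "join_slices n k \<psi> \<in> carrier_vec (n * k)"
  by (simp add: join_slices_def)

lemma slice_join_slices:
  assumes "i < k" "\<psi> i \<in> carrier_vec n"
  shows "slice n k i (join_slices n k \<psi>) = \<psi> i"
  using assms mult_add_less_mult by (auto simp: slice_def join_slices_def)

lemma sq_norm_slices:
  assumes "\<Psi> \<in> carrier_vec (n * k)"
  shows "sq_norm \<Psi> = (\<Sum>i<k. sq_norm (slice n k i \<Psi>))"
  using assms by (simp add: sq_norm_def slice_def sum_lessThan_mult sum.swap[of _ "{..<n}"])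

lemma kron_one_carrier: "A \<in> carrier_mat n n \<Longrightarrow> kron A (1\<^sub>m k) \<in> carrier_mat (n * k) (n * k)"
  by (simp add: kron_def)

lemma kron_one_index:
  assumes "A \<in> carrier_mat n n" "b < n" "j < k" "a < n" "i < k"
  shows "kron A (1\<^sub>m k) $$ (b * k + j, a * k + i) = (if j = i then A $$ (b, a) else 0)"
  using assms mult_add_less_mult[of b n j k] mult_add_less_mult[of a n i k]
  by (simp add: kron_def)

lemma expval_kron_one:
  assumes A: "A \<in> carrier_mat n n" and \<Psi>: "\<Psi> \<in> carrier_vec (n * k)"
  shows "expval (kron A (1\<^sub>m k)) \<Psi> = (\<Sum>i<k. expval A (slice n k i \<Psi>))"
proof -
  have "kron A (1\<^sub>m k) \<in> carrier_mat (n * k) (n * k)"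
    by (rule kron_one_carrier[OF A])
  then have "expval (kron A (1\<^sub>m k)) \<Psi> = Re (\<Sum>b<n. \<Sum>j<k. \<Sum>a<n. \<Sum>i<k.
      cnj (\<Psi> $ (b * k + j)) * (if j = i then A $$ (b, a) else 0) * \<Psi> $ (a * k + i))"
    using A \<Psi> by (simp add: expval_eq_sum sum_lessThan_mult kron_one_index)
  also have "\<dots> = Re (\<Sum>b<n. \<Sum>j<k. \<Sum>a<n. cnj (\<Psi> $ (b * k + j)) * A $$ (b, a) * \<Psi> $ (a * k + j))"
    by (intro arg_cong[where f = Re] sum.cong refl)
      (simp add: if_distrib[where f = "\<lambda>x. _ * x"] if_distrib[where f = "\<lambda>x. x * _"] cong: if_cong)
  also have "\<dots> = (\<Sum>j<k. expval A (slice n k j \<Psi>))"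
    using A by (simp add: expval_eq_sum slice_def sum.swap[of _ "{..<k}"])
  finally show ?thesis .
qed

lemma sq_norm_scaled_slices:
  assumes "\<Psi> \<in> carrier_vec (n * k)"
    and "\<And>i. i < k \<Longrightarrow> 0 \<le> t i \<and> slice n k i \<Psi> = complex_of_real (sqrt (t i)) \<cdot>\<^sub>v \<phi> i"
  shows "sq_norm \<Psi> = (\<Sum>i<k. t i * sq_norm (\<phi> i))"
  using assms by (simp add: sq_norm_slices sq_norm_smult)

lemma expval_kron_one_scaled_slices:
  assumes "A \<in> carrier_mat n n" "\<Psi> \<in> carrier_vec (n * k)"
    and "\<And>i. i < k \<Longrightarrow> \<phi> i \<in> carrier_vec n \<and> 0 \<le> t i \<and>
      slice n k i \<Psi> = complex_of_real (sqrt (t i)) \<cdot>\<^sub>v \<phi> i"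
  shows "expval (kron A (1\<^sub>m k)) \<Psi> = (\<Sum>i<k. t i * expval A (\<phi> i))"
  using assms by (simp add: expval_kron_one expval_smult)

section \<open>Pure states of the convexified theory\<close>

lemma unit_vec_slice_decomposition:
  assumes "\<Psi> \<in> unit_vecs (n * k)"
  obtains t \<phi> where "\<And>i. i < k \<Longrightarrow> \<phi> i \<in> unit_vecs n \<and> 0 \<le> t i \<and>
      slice n k i \<Psi> = complex_of_real (sqrt (t i)) \<cdot>\<^sub>v \<phi> i"
    and "(\<Sum>i<k. t i) = 1"
proof -
  have \<Psi>: "\<Psi> \<in> carrier_vec (n * k)" "sq_norm \<Psi> = 1"
    using assms by (auto simp: unit_vecs_iff)
  then have "0 < n"
    by (cases n) (auto simp: sq_norm_def)
  define t where "t i = sq_norm (slice n k i \<Psi>)" for i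
  have "\<forall>i. \<exists>\<phi>. \<phi> \<in> unit_vecs n \<and> slice n k i \<Psi> = complex_of_real (sqrt (t i)) \<cdot>\<^sub>v \<phi>"
    using scaled_unit_vec_exists[OF slice_carrier \<open>0 < n\<close>] by (metis t_def)
  then obtain \<phi> where "\<And>i. \<phi> i \<in> unit_vecs n \<and> slice n k i \<Psi> = complex_of_real (sqrt (t i)) \<cdot>\<^sub>v \<phi> i"
    by metis
  moreover have "(\<Sum>i<k. t i) = 1"
    using \<Psi> by (simp add: t_def sq_norm_slices)
  ultimately show ?thesis
    by (intro that[of \<phi> t]) (simp_all add: t_def sq_norm_nonneg)
qed

lemma unit_vec_from_slices:
  assumes "\<And>i. i < k \<Longrightarrow> \<phi> i \<in> unit_vecs n \<and> 0 \<le> t i" and "(\<Sum>i<k. t i) = 1"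
  obtains \<Psi> where "\<Psi> \<in> unit_vecs (n * k)"
    and "\<And>i. i < k \<Longrightarrow> slice n k i \<Psi> = complex_of_real (sqrt (t i)) \<cdot>\<^sub>v \<phi> i"
proof -
  define \<Psi> where "\<Psi> = join_slices n k (\<lambda>i. complex_of_real (sqrt (t i)) \<cdot>\<^sub>v \<phi> i)"
  have slices: "slice n k i \<Psi> = complex_of_real (sqrt (t i)) \<cdot>\<^sub>v \<phi> i" if "i < k" for i
    using assms(1)[OF that] that by (simp add: \<Psi>_def slice_join_slices unit_vecs_iff)
  have "sq_norm \<Psi> = (\<Sum>i<k. t i * sq_norm (\<phi> i))"
    using assms(1) slices by (intro sq_norm_scaled_slices) (auto simp: \<Psi>_def)
  also have "\<dots> = 1"
    using assms by (simp add: unit_vecs_iff)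
  finally have "\<Psi> \<in> unit_vecs (n * k)"
    by (simp add: unit_vecs_iff \<Psi>_def)
  then show ?thesis
    using slices by (rule that)
qed

lemma dual_map_conv_iota_scaled_slices:
  assumes \<iota>: "\<forall>v. \<iota> v \<in> carrier_mat n n" and \<Psi>: "\<Psi> \<in> carrier_vec (n * k)"
    and slices: "\<And>i. i < k \<Longrightarrow> \<phi> i \<in> carrier_vec n \<and> 0 \<le> t i \<and>
      slice n k i \<Psi> = complex_of_real (sqrt (t i)) \<cdot>\<^sub>v \<phi> i"
  shows "dual_map (conv_iota k \<iota>) (proj \<Psi>) = (\<lambda>v. \<Sum>i<k. t i * dual_map \<iota> (proj (\<phi> i)) v)"
proof
  fix v
  have "conv_iota k \<iota> v \<in> carrier_mat (n * k) (n * k)"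
    unfolding conv_iota_def by (rule kron_one_carrier[OF \<iota>[rule_format]])
  then have "dual_map (conv_iota k \<iota>) (proj \<Psi>) v = expval (kron (\<iota> v) (1\<^sub>m k)) \<Psi>"
    using \<Psi> by (simp add: dual_map_proj conv_iota_def)
  also have "\<dots> = (\<Sum>i<k. t i * expval (\<iota> v) (\<phi> i))"
    by (rule expval_kron_one_scaled_slices[OF \<iota>[rule_format] \<Psi> slices])
  also have "\<dots> = (\<Sum>i<k. t i * dual_map \<iota> (proj (\<phi> i)) v)"
    using slices by (auto simp: dual_map_proj[of \<iota> v, OF \<iota>[rule_format]] intro!: sum.cong)
  finally show "dual_map (conv_iota k \<iota>) (proj \<Psi>) v = (\<Sum>i<k. t i * dual_map \<iota> (proj (\<phi> i)) v)" .
qed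

lemma convexified_pure_state_iff:
  assumes \<iota>: "\<forall>v. \<iota> v \<in> carrier_mat n n" and W: "W \<in> carrier_mat n n"
  shows "(\<exists>\<Psi>\<in>unit_vecs (n * k). dual_map (conv_iota k \<iota>) (proj \<Psi>) = \<rho> \<and> expval (kron W (1\<^sub>m k)) \<Psi> = e)
    \<longleftrightarrow> (\<exists>t \<phi>. (\<forall>i<k. \<phi> i \<in> unit_vecs n \<and> 0 \<le> t i) \<and> (\<Sum>i<k. t i) = 1 \<and>
          \<rho> = (\<lambda>v. \<Sum>i<k. t i * dual_map \<iota> (proj (\<phi> i)) v) \<and> e = (\<Sum>i<k. t i * expval W (\<phi> i)))"
    (is "?pure \<longleftrightarrow> ?convex")
proof -
  have components: "dual_map (conv_iota k \<iota>) (proj \<Psi>) = (\<lambda>v. \<Sum>i<k. t i * dual_map \<iota> (proj (\<phi> i)) v)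
      \<and> expval (kron W (1\<^sub>m k)) \<Psi> = (\<Sum>i<k. t i * expval W (\<phi> i))"
    if "\<Psi> \<in> unit_vecs (n * k)" and slices: "\<And>i. i < k \<Longrightarrow> \<phi> i \<in> unit_vecs n \<and> 0 \<le> t i \<and>
      slice n k i \<Psi> = complex_of_real (sqrt (t i)) \<cdot>\<^sub>v \<phi> i" for \<Psi> t \<phi>
  proof -
    have \<Psi>: "\<Psi> \<in> carrier_vec (n * k)"
      using that(1) by (simp add: unit_vecs_iff)
    have "\<phi> i \<in> carrier_vec n \<and> 0 \<le> t i \<and> slice n k i \<Psi> = complex_of_real (sqrt (t i)) \<cdot>\<^sub>v \<phi> i"
      if "i < k" for i
      using slices[OF that] by (simp add: unit_vecs_iff)
    then show ?thesis
      using dual_map_conv_iota_scaled_slices[OF \<iota> \<Psi>] expval_kron_one_scaled_slices[OF W \<Psi>]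
      by blast
  qed
  show ?thesis
  proof
    assume ?pure
    then obtain \<Psi> where \<Psi>: "\<Psi> \<in> unit_vecs (n * k)"
      and "dual_map (conv_iota k \<iota>) (proj \<Psi>) = \<rho>" "expval (kron W (1\<^sub>m k)) \<Psi> = e"
      by blast
    moreover obtain t \<phi> where "\<And>i. i < k \<Longrightarrow> \<phi> i \<in> unit_vecs n \<and> 0 \<le> t i \<and>
        slice n k i \<Psi> = complex_of_real (sqrt (t i)) \<cdot>\<^sub>v \<phi> i" and "(\<Sum>i<k. t i) = 1"
      using unit_vec_slice_decomposition[OF \<Psi>] by blast
    ultimately show ?convex
      using components by blast
  next
    assume ?convex
    then obtain t \<phi> where \<phi>: "\<And>i. i < k \<Longrightarrow> \<phi> i \<in> unit_vecs n \<and> 0 \<le> t i" and "(\<Sum>i<k. t i) = 1"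
      and "\<rho> = (\<lambda>v. \<Sum>i<k. t i * dual_map \<iota> (proj (\<phi> i)) v)" "e = (\<Sum>i<k. t i * expval W (\<phi> i))"
      by blast
    moreover obtain \<Psi> where "\<Psi> \<in> unit_vecs (n * k)"
      and "\<And>i. i < k \<Longrightarrow> slice n k i \<Psi> = complex_of_real (sqrt (t i)) \<cdot>\<^sub>v \<phi> i"
      using unit_vec_from_slices[OF \<phi> \<open>(\<Sum>i<k. t i) = 1\<close>] by blast
    ultimately show ?pure
      using components[of \<Psi> \<phi> t] by auto
  qed
qed

section \<open>Convex envelopes of fibrewise infima\<close>

lemma convex_combination_ge:
  fixes t y :: "nat \<Rightarrow> real"
  assumes "\<And>i. i < k \<Longrightarrow> 0 \<le> t i \<and> c \<le> y i" and "(\<Sum>i<k. t i) = 1"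
  shows "c \<le> (\<Sum>i<k. t i * y i)"
proof -
  have "c = (\<Sum>i<k. t i * c)"
    using assms(2) by (simp flip: sum_distrib_right)
  also have "\<dots> \<le> (\<Sum>i<k. t i * y i)"
    using assms(1) by (intro sum_mono mult_left_mono) auto
  finally show ?thesis .
qed

lemma conv_set_image:
  "conv_set k (g ` A) =
    {(\<lambda>v. \<Sum>i<k. t i * g (a i) v) | t a. (\<forall>i<k. a i \<in> A \<and> 0 \<le> t i) \<and> (\<Sum>i<k. t i) = 1}"
proof (intro equalityI subsetI)
  fix s assume "s \<in> conv_set k (g ` A)"
  then obtain t x where tx: "\<forall>i<k. x i \<in> g ` A \<and> 0 \<le> t i" "(\<Sum>i<k. t i) = 1"
    and s: "s = (\<lambda>v. \<Sum>i<k. t i * x i v)"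
    by (auto simp: conv_set_def)
  then have "\<forall>i. \<exists>a. i < k \<longrightarrow> a \<in> A \<and> x i = g a"
    by blast
  then obtain a where "\<And>i. i < k \<Longrightarrow> a i \<in> A \<and> x i = g (a i)"
    by metis
  with tx s show "s \<in> {(\<lambda>v. \<Sum>i<k. t i * g (a i) v) | t a. (\<forall>i<k. a i \<in> A \<and> 0 \<le> t i) \<and> (\<Sum>i<k. t i) = 1}"
    by (auto intro!: exI[of _ t] exI[of _ a] sum.cong)
next
  fix s assume "s \<in> {(\<lambda>v. \<Sum>i<k. t i * g (a i) v) | t a. (\<forall>i<k. a i \<in> A \<and> 0 \<le> t i) \<and> (\<Sum>i<k. t i) = 1}"
  then obtain t a where "\<forall>i<k. a i \<in> A \<and> 0 \<le> t i" "(\<Sum>i<k. t i) = 1" "s = (\<lambda>v. \<Sum>i<k. t i * g (a i) v)"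
    by blast
  then show "s \<in> conv_set k (g ` A)"
    unfolding conv_set_def by (intro CollectI exI[of _ t] exI[of _ "\<lambda>i. g (a i)"]) auto
qed

definition fiber_Inf :: "('a \<Rightarrow> 'b) \<Rightarrow> ('a \<Rightarrow> real) \<Rightarrow> 'a set \<Rightarrow> 'b \<Rightarrow> real" where
  "fiber_Inf g f A x = Inf {f a | a. a \<in> A \<and> g a = x}"

lemma fiber_Inf_le:
  assumes "\<forall>a\<in>A. c \<le> f a" "a \<in> A"
  shows "fiber_Inf g f A (g a) \<le> f a"
  unfolding fiber_Inf_def using assms by (intro cInf_lower bdd_belowI[of _ c]) auto

lemma fiber_Inf_ge:
  assumes "\<forall>a\<in>A. c \<le> f a" "x \<in> g ` A"
  shows "c \<le> fiber_Inf g f A x"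
  unfolding fiber_Inf_def using assms by (intro cInf_greatest) auto

lemma fiber_Inf_approx:
  assumes "\<forall>a\<in>A. c \<le> f a" "x \<in> g ` A" "0 < \<epsilon>"
  obtains a where "a \<in> A" "g a = x" "f a < fiber_Inf g f A x + \<epsilon>"
proof -
  have "Inf {f a | a. a \<in> A \<and> g a = x} < fiber_Inf g f A x + \<epsilon>"
    using assms(3) by (simp add: fiber_Inf_def)
  moreover have "{f a | a. a \<in> A \<and> g a = x} \<noteq> {}" "bdd_below {f a | a. a \<in> A \<and> g a = x}"
    using assms(1,2) by (auto intro: bdd_belowI[of _ c])
  ultimately show ?thesis
    using that by (auto simp: cInf_less_iff)
qed

definition conv_values ::
    "nat \<Rightarrow> ('a \<Rightarrow> 'v \<Rightarrow> real) \<Rightarrow> ('a \<Rightarrow> real) \<Rightarrow> 'a set \<Rightarrow> ('v \<Rightarrow> real) \<Rightarrow> real set"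
  where "conv_values k g f A \<rho> = {\<Sum>i<k. t i * f (a i) | t a. (\<forall>i<k. a i \<in> A \<and> 0 \<le> t i) \<and>
    (\<Sum>i<k. t i) = 1 \<and> \<rho> = (\<lambda>v. \<Sum>i<k. t i * g (a i) v)}"

lemma bdd_below_conv_values:
  assumes "\<forall>a\<in>A. c \<le> f a"
  shows "bdd_below (conv_values k g f A \<rho>)"
  using assms by (auto simp: conv_values_def intro!: bdd_belowI[of _ c] convex_combination_ge)

lemma Inf_conv_values_le:
  assumes bounded: "\<forall>a\<in>A. c \<le> f a"
    and tx: "\<forall>i<k. x i \<in> g ` A \<and> 0 \<le> t i" "(\<Sum>i<k. t i) = 1" "\<rho> = (\<lambda>v. \<Sum>i<k. t i * x i v)"
  shows "Inf (conv_values k g f A \<rho>) \<le> (\<Sum>i<k. t i * fiber_Inf g f A (x i))"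
proof (rule field_le_epsilon)
  fix \<epsilon> :: real assume "0 < \<epsilon>"
  have "\<forall>i. \<exists>a. i < k \<longrightarrow> a \<in> A \<and> g a = x i \<and> f a < fiber_Inf g f A (x i) + \<epsilon>"
    using fiber_Inf_approx[OF bounded _ \<open>0 < \<epsilon>\<close>] tx(1) by metis
  then obtain a where a: "\<And>i. i < k \<Longrightarrow> a i \<in> A \<and> g (a i) = x i \<and> f (a i) < fiber_Inf g f A (x i) + \<epsilon>"
    by metis
  have "(\<Sum>i<k. t i * f (a i)) \<in> conv_values k g f A \<rho>"
    using tx a by (auto simp: conv_values_def intro!: exI[of _ t] exI[of _ a] sum.cong)
  then have "Inf (conv_values k g f A \<rho>) \<le> (\<Sum>i<k. t i * f (a i))"
    by (rule cInf_lower[OF _ bdd_below_conv_values[OF bounded]])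
  also have "\<dots> \<le> (\<Sum>i<k. t i * (fiber_Inf g f A (x i) + \<epsilon>))"
    using tx(1) a by (intro sum_mono mult_left_mono) (auto intro: less_imp_le)
  also have "\<dots> = (\<Sum>i<k. t i * fiber_Inf g f A (x i)) + \<epsilon>"
    using tx(2) by (simp add: distrib_left sum.distrib flip: sum_distrib_right)
  finally show "Inf (conv_values k g f A \<rho>) \<le> (\<Sum>i<k. t i * fiber_Inf g f A (x i)) + \<epsilon>" .
qed

lemma conv_fun_fiber_Inf:
  fixes f :: "'a \<Rightarrow> real" and g :: "'a \<Rightarrow> 'v \<Rightarrow> real"
  assumes bounded: "\<forall>a\<in>A. c \<le> f a" and \<rho>: "\<rho> \<in> conv_set k (g ` A)"
  shows "conv_fun k (g ` A) (fiber_Inf g f A) \<rho> = Inf (conv_values k g f A \<rho>)"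
proof -
  let ?F = "fiber_Inf g f A"
  define S where "S = {\<Sum>i<k. t i * ?F (x i) | t x. (\<forall>i<k. x i \<in> g ` A \<and> 0 \<le> t i) \<and>
    (\<Sum>i<k. t i) = 1 \<and> \<rho> = (\<lambda>v. \<Sum>i<k. t i * x i v)}"
  have "S \<noteq> {}"
    using \<rho> by (auto simp: S_def conv_set_def)
  have "conv_values k g f A \<rho> \<noteq> {}"
    using \<rho> by (auto simp: conv_values_def conv_set_image)
  have "bdd_below S"
    using fiber_Inf_ge[OF bounded, where g = g]
    by (auto simp: S_def intro!: bdd_belowI[of _ c] convex_combination_ge)
  have "Inf S \<le> Inf (conv_values k g f A \<rho>)"
  proof (rule cInf_greatest[OF \<open>conv_values k g f A \<rho> \<noteq> {}\<close>])
    fix y assume "y \<in> conv_values k g f A \<rho>"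
    then obtain t a where ta: "\<forall>i<k. a i \<in> A \<and> 0 \<le> t i" "(\<Sum>i<k. t i) = 1"
      "\<rho> = (\<lambda>v. \<Sum>i<k. t i * g (a i) v)" and y: "y = (\<Sum>i<k. t i * f (a i))"
      by (auto simp: conv_values_def)
    have "(\<Sum>i<k. t i * ?F (g (a i))) \<in> S"
      using ta by (auto simp: S_def intro!: exI[of _ t] exI[of _ "\<lambda>i. g (a i)"])
    then have "Inf S \<le> (\<Sum>i<k. t i * ?F (g (a i)))"
      by (rule cInf_lower[OF _ \<open>bdd_below S\<close>])
    also have "\<dots> \<le> y"
      unfolding y using ta fiber_Inf_le[OF bounded, where g = g]
      by (intro sum_mono mult_left_mono) auto
    finally show "Inf S \<le> y" .
  qed
  moreover have "Inf (conv_values k g f A \<rho>) \<le> Inf S"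
  proof (rule cInf_greatest[OF \<open>S \<noteq> {}\<close>])
    fix y assume "y \<in> S"
    then show "Inf (conv_values k g f A \<rho>) \<le> y"
      by (auto simp: S_def intro: Inf_conv_values_le[OF bounded])
  qed
  ultimately show ?thesis
    by (simp add: conv_fun_def S_def)
qed

section \<open>The convexified pure functional\<close>

lemma pure_image_eq_image: "pure_image n \<iota> = (\<lambda>\<psi>. dual_map \<iota> (proj \<psi>)) ` unit_vecs n"
  by (auto simp: pure_image_def)

lemma pure_functional_eq_fiber_Inf:
  "pure_functional n \<iota> W = fiber_Inf (\<lambda>\<psi>. dual_map \<iota> (proj \<psi>)) (expval W) (unit_vecs n)"
  by (simp add: fun_eq_iff pure_functional_def fiber_Inf_def)

lemma pure_image_conv_iota:
  assumes \<iota>: "\<forall>v. \<iota> v \<in> carrier_mat n n"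
  shows "pure_image (n * k) (conv_iota k \<iota>) = conv_set k (pure_image n \<iota>)"
proof -
  let ?W = "0\<^sub>m n n :: complex mat"
  have "\<rho> \<in> pure_image (n * k) (conv_iota k \<iota>) \<longleftrightarrow> (\<exists>e. \<exists>\<Psi>\<in>unit_vecs (n * k).
      dual_map (conv_iota k \<iota>) (proj \<Psi>) = \<rho> \<and> expval (kron ?W (1\<^sub>m k)) \<Psi> = e)" for \<rho>
    by (auto simp: pure_image_def)
  then show ?thesis
    unfolding pure_image_eq_image[of n] conv_set_image
      convexified_pure_state_iff[OF \<iota> zero_carrier_mat]
    by blast
qed

lemma pure_functional_conv_iota:
  assumes \<iota>: "\<forall>v. \<iota> v \<in> carrier_mat n n" and W: "W \<in> carrier_mat n n"
    and \<rho>: "\<rho> \<in> conv_set k (pure_image n \<iota>)"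
  shows "pure_functional (n * k) (conv_iota k \<iota>) (kron W (1\<^sub>m k)) \<rho>
    = conv_fun k (pure_image n \<iota>) (pure_functional n \<iota> W) \<rho>"
proof -
  have bounded: "\<forall>\<psi>\<in>unit_vecs n. - (\<Sum>b<n. \<Sum>a<n. cmod (W $$ (b, a))) \<le> expval W \<psi>"
    using abs_expval_le_sum_entries[OF W] by (metis abs_le_D2 minus_le_iff)
  have "pure_functional (n * k) (conv_iota k \<iota>) (kron W (1\<^sub>m k)) \<rho> = Inf {e. \<exists>\<Psi>\<in>unit_vecs (n * k).
      dual_map (conv_iota k \<iota>) (proj \<Psi>) = \<rho> \<and> expval (kron W (1\<^sub>m k)) \<Psi> = e}"
    unfolding pure_functional_def by (intro arg_cong[where f = Inf]) blast
  also have "\<dots> = Inf (conv_values k (\<lambda>\<psi>. dual_map \<iota> (proj \<psi>)) (expval W) (unit_vecs n) \<rho>)"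
    unfolding convexified_pure_state_iff[OF \<iota> W] conv_values_def
    by (intro arg_cong[where f = Inf]) blast
  also have "\<dots> = conv_fun k (pure_image n \<iota>) (pure_functional n \<iota> W) \<rho>"
    unfolding pure_image_eq_image pure_functional_eq_fiber_Inf
    by (rule conv_fun_fiber_Inf[OF bounded \<rho>[unfolded pure_image_eq_image], symmetric])
  finally show ?thesis .
qed

theorem proposition2p40:
  fixes n k :: nat and \<iota> :: "'v::euclidean_space \<Rightarrow> complex mat" and W :: "complex mat"
  assumes "gen_functional_theory n \<iota> W"
    and "k > 0"
  shows "conv_set k (pure_image n \<iota>) = pure_image (n * k) (conv_iota k \<iota>)
    \<and> (\<forall>\<rho> \<in> conv_set k (pure_image n \<iota>).
         conv_fun k (pure_image n \<iota>) (pure_functional n \<iota> W) \<rho>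
           = pure_functional (n * k) (conv_iota k \<iota>) (kron W (1\<^sub>m k)) \<rho>)"
proof -
  have \<iota>: "\<forall>v. \<iota> v \<in> carrier_mat n n" and W: "W \<in> carrier_mat n n"
    using assms(1) by (auto simp: gen_functional_theory_def hermitian_mat_def)
  show ?thesis
    using pure_image_conv_iota[OF \<iota>] pure_functional_conv_iota[OF \<iota> W]
    by simp
qed

end
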